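(* Let $G$ be a simple graph that is either a tree, or is connected and contains exactly one cycle $C$, where $C$ is not a 3-cycle. Form $G'$ from $G$ by adding a new vertex $v$ adjacent to at most four vertices of $G$, at least one of which lies on $C$ if $C$ exists. Then $G'$ has a near-bipartite coloring $I,F$ with $I\subseteq N_{G'}(v)$.
   Context: A near-bipartite coloring of a graph is a partition of its vertex set into $I,F$ with $I$ independent and the subgraph induced by $F$ a forest. *)

theory Defs
  imports Main
begin

definition sgraph :: "'a set \<Rightarrow> ('a \<Rightarrow> 'a \<Rightarrow> bool) \<Rightarrow> bool" where
  "sgraph V E \<longleftrightarrow> finite V \<and> (\<forall>x y. E x y \<longrightarrow> x \<in> V \<and> y \<in> V)
     \<and> (\<forall>x y. E x y \<longrightarrow> E y x) \<and> (\<forall>x. \<not> E x x)"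

definition is_cycle :: "'a set \<Rightarrow> ('a \<Rightarrow> 'a \<Rightarrow> bool) \<Rightarrow> 'a list \<Rightarrow> bool" where
  "is_cycle S E cs \<longleftrightarrow> length cs \<ge> 3 \<and> distinct cs \<and> set cs \<subseteq> S
     \<and> (\<forall>i < length cs. E (cs ! i) (cs ! ((i + 1) mod length cs)))"

definition cyc_edges :: "'a list \<Rightarrow> 'a set set" where
  "cyc_edges cs = {{cs ! i, cs ! ((i + 1) mod length cs)} | i. i < length cs}"

definition induced_forest :: "'a set \<Rightarrow> ('a \<Rightarrow> 'a \<Rightarrow> bool) \<Rightarrow> bool" where
  "induced_forest S E \<longleftrightarrow> (\<nexists>cs. is_cycle S E cs)"

definition connected_graph :: "'a set \<Rightarrow> ('a \<Rightarrow> 'a \<Rightarrow> bool) \<Rightarrow> bool" where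
  "connected_graph V E \<longleftrightarrow>
     (\<forall>x\<in>V. \<forall>y\<in>V. (\<lambda>a b. E a b \<and> a \<in> V \<and> b \<in> V)\<^sup>*\<^sup>* x y)"

definition is_tree :: "'a set \<Rightarrow> ('a \<Rightarrow> 'a \<Rightarrow> bool) \<Rightarrow> bool" where
  "is_tree V E \<longleftrightarrow> V \<noteq> {} \<and> connected_graph V E \<and> induced_forest V E"

definition independent :: "'a set \<Rightarrow> ('a \<Rightarrow> 'a \<Rightarrow> bool) \<Rightarrow> bool" where
  "independent I E \<longleftrightarrow> (\<forall>x\<in>I. \<forall>y\<in>I. \<not> E x y)"

definition near_bipartite_coloring ::
  "'a set \<Rightarrow> ('a \<Rightarrow> 'a \<Rightarrow> bool) \<Rightarrow> 'a set \<Rightarrow> 'a set \<Rightarrow> bool" where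
  "near_bipartite_coloring V E I F \<longleftrightarrow> I \<union> F = V \<and> I \<inter> F = {}
     \<and> independent I E \<and> induced_forest F E"

definition add_vertex :: "('a \<Rightarrow> 'a \<Rightarrow> bool) \<Rightarrow> 'a \<Rightarrow> 'a set \<Rightarrow> 'a \<Rightarrow> 'a \<Rightarrow> bool" where
  "add_vertex E v N x y \<longleftrightarrow> E x y \<or> (x = v \<and> y \<in> N) \<or> (y = v \<and> x \<in> N)"

end

theory Submission
  imports Defs
begin

text \<open>
  Put v into F and choose I inside N(v).  The colouring is near-bipartite as soon as I is
  independent, meets every cycle of G, and no two vertices of N(v) - I are joined by a path of
  G - I, because a cycle of G' - I through v is such a path closed up by v.

  All cycles of G have the same vertex set K, of size at least 4, so G has no triangles.  If a
  single vertex z of N meets every edge of G[N], take I = N - {z}, or, when z is the only vertex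
  of N on K, the non-neighbours of z in N: two neighbours of z joined outside I would lie on a
  cycle through z.  Otherwise G[N] consists of two disjoint edges ab and cd, and we try the pairs
  {x, y} with x in {a, b} and y in {c, d}.  A pair fails only if it misses K or the two other
  vertices are joined outside it; such a connection together with an edge, or two such
  connections together, produce cycles, and the resulting information about which of a, b, c, d
  lie on K is contradictory.
\<close>

lemma rtranclp_distinct_path:
  assumes "R\<^sup>*\<^sup>* p q"
  shows "\<exists>xs. xs \<noteq> [] \<and> hd xs = p \<and> last xs = q \<and> distinct xs \<and> successively R xs"
  using assms
proof (induction rule: converse_rtranclp_induct)
  case base
  show ?case by (intro exI[of _ "[q]"]) auto
next
  case (step p p')
  then obtain xs where xs: "xs \<noteq> []" "hd xs = p'" "last xs = q" "distinct xs" "successively R xs"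
    by blast
  show ?case
  proof (cases "p \<in> set xs")
    case True
    then obtain ys zs where "xs = ys @ p # zs" by (meson split_list)
    with xs show ?thesis by (intro exI[of _ "p # zs"]) (auto simp: successively_append_iff)
  next
    case False
    with xs step(1) show ?thesis by (intro exI[of _ "p # xs"]) (auto simp: successively_Cons)
  qed
qed

lemma successively_guarded_all:
  assumes "successively (\<lambda>s t. R s t \<and> P s \<and> P t) xs" "2 \<le> length xs"
  shows "\<forall>x\<in>set xs. P x"
proof
  fix x assume "x \<in> set xs"
  then obtain k where k: "k < length xs" "x = xs ! k" by (metis in_set_conv_nth)
  show "P x"
  proof (cases "Suc k < length xs")
    case True
    then show ?thesis using successively_nth[OF assms(1) True] k by simp
  next
    case False
    with k assms(2) have "Suc (k - 1) < length xs" "Suc (k - 1) = k" by auto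
    then show ?thesis using successively_nth[OF assms(1), of "k - 1"] k by simp
  qed
qed

lemma successively_edges_in_vertices:
  assumes "sgraph V E" "successively E xs" "2 \<le> length xs"
  shows "set xs \<subseteq> V"
proof -
  have "successively (\<lambda>s t. E s t \<and> s \<in> V \<and> t \<in> V) xs"
    using assms(2) by (rule successively_mono) (use assms(1) in \<open>auto simp: sgraph_def\<close>)
  then show ?thesis using successively_guarded_all[of E "\<lambda>s. s \<in> V"] assms(3) by blast
qed

lemma length_ge_2_if_hd_neq_last:
  assumes "xs \<noteq> []" "hd xs \<noteq> last xs"
  shows "2 \<le> length xs"
  using assms by (cases xs rule: remdups_adj.cases) auto

lemma successively_length_ge_3:
  assumes "successively R xs" "xs \<noteq> []" "hd xs \<noteq> last xs" "\<not> R (hd xs) (last xs)"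
  shows "3 \<le> length xs"
  using assms
proof (cases xs rule: remdups_adj.cases)
  case (3 x y zs)
  with assms show ?thesis by (cases zs) auto
qed auto

definition connected_avoiding :: "('a \<Rightarrow> 'a \<Rightarrow> bool) \<Rightarrow> 'a set \<Rightarrow> 'a \<Rightarrow> 'a \<Rightarrow> bool" where
  "connected_avoiding E X p q \<longleftrightarrow> (\<lambda>s t. E s t \<and> s \<notin> X \<and> t \<notin> X)\<^sup>*\<^sup>* p q"

lemma connected_avoiding_sym:
  assumes "sgraph V E" "connected_avoiding E X p q"
  shows "connected_avoiding E X q p"
proof -
  have "symp (\<lambda>s t. E s t \<and> s \<notin> X \<and> t \<notin> X)"
    using assms(1) unfolding sgraph_def by (auto intro: sympI)
  then show ?thesis
    using assms(2) unfolding connected_avoiding_def by (rule sympD[OF symp_rtranclp])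
qed

lemma connected_avoiding_path:
  assumes "sgraph V E" "connected_avoiding E X p q" "p \<noteq> q"
  obtains xs where "hd xs = p" "last xs = q" "distinct xs" "2 \<le> length xs"
    "successively E xs" "set xs \<subseteq> V" "set xs \<inter> X = {}"
proof -
  obtain xs where xs: "xs \<noteq> []" "hd xs = p" "last xs = q" "distinct xs"
    and path: "successively (\<lambda>s t. E s t \<and> s \<notin> X \<and> t \<notin> X) xs"
    using rtranclp_distinct_path[OF assms(2)[unfolded connected_avoiding_def]] by blast
  have len: "2 \<le> length xs" using length_ge_2_if_hd_neq_last[OF xs(1)] xs(2,3) assms(3) by simp
  have walk: "successively E xs" using path by (rule successively_mono) simp
  have "\<forall>x\<in>set xs. x \<notin> X"
    using successively_guarded_all[of E "\<lambda>s. s \<notin> X", OF path len] .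
  then have "set xs \<inter> X = {}" by blast
  moreover have "set xs \<subseteq> V" using successively_edges_in_vertices[OF assms(1) walk len] .
  ultimately show ?thesis using that xs(2-4) len walk by blast
qed

lemma connected_avoiding_segment:
  assumes "\<And>m. i \<le> m \<Longrightarrow> Suc m < length xs \<Longrightarrow> E (xs ! m) (xs ! Suc m)"
    and "set xs \<inter> X = {}" "i \<le> j" "j < length xs"
  shows "connected_avoiding E X (xs ! i) (xs ! j)"
  using assms(3,4)
proof (induction j rule: dec_induct)
  case base
  show ?case unfolding connected_avoiding_def by simp
next
  case (step m)
  then have "xs ! m \<in> set xs" "xs ! Suc m \<in> set xs" by simp_all
  then have "xs ! m \<notin> X" "xs ! Suc m \<notin> X" using assms(2) by blast+
  with step assms(1) show ?case
    unfolding connected_avoiding_def by (simp add: rtranclp.rtrancl_into_rtrancl)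
qed

lemma is_cycle_of_path:
  assumes "distinct xs" "3 \<le> length xs" "set xs \<subseteq> V" "successively E xs"
    "E (last xs) (hd xs)"
  shows "is_cycle V E xs"
  unfolding is_cycle_def
proof (intro conjI allI impI)
  fix i assume i: "i < length xs"
  show "E (xs ! i) (xs ! ((i + 1) mod length xs))"
  proof (cases "Suc i < length xs")
    case True
    then show ?thesis using successively_nth[OF assms(4) True] by simp
  next
    case False
    with i have "i = length xs - 1" by simp
    moreover have "xs \<noteq> []" using assms(2) by auto
    ultimately show ?thesis using assms(5) i by (simp add: last_conv_nth hd_conv_nth)
  qed
qed (use assms in auto)

lemma is_cycle_rotate:
  assumes "is_cycle S E D"
  shows "is_cycle S E (rotate k D)"
  unfolding is_cycle_def
proof (intro conjI allI impI)
  let ?n = "length D"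
  have n: "0 < ?n" using assms unfolding is_cycle_def by auto
  fix i assume "i < length (rotate k D)"
  then have i: "i < ?n" by simp
  have "(k + (i + 1) mod ?n) mod ?n = ((k + i) mod ?n + 1) mod ?n"
    by (metis add.assoc mod_add_left_eq mod_add_right_eq)
  moreover have "E (D ! ((k + i) mod ?n)) (D ! (((k + i) mod ?n + 1) mod ?n))"
    using assms n unfolding is_cycle_def by simp
  ultimately show "E (rotate k D ! i) (rotate k D ! ((i + 1) mod length (rotate k D)))"
    using n by (simp add: nth_rotate[OF i] nth_rotate)
qed (use assms in \<open>auto simp: is_cycle_def\<close>)

lemma triangle_is_cycle:
  assumes "sgraph V E" "E a b" "E b c" "E a c"
  shows "is_cycle V E [a, b, c]"
proof (rule is_cycle_of_path)
  have "\<forall>x. \<not> E x x" "\<forall>x y. E x y \<longrightarrow> x \<in> V \<and> y \<in> V" "E c a"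
    using assms unfolding sgraph_def by blast+
  with assms(2-4) show "distinct [a, b, c]" "set [a, b, c] \<subseteq> V" "E (last [a, b, c]) (hd [a, b, c])"
    by auto
qed (use assms in simp_all)

lemma Union_cyc_edges:
  assumes "xs \<noteq> []"
  shows "\<Union>(cyc_edges xs) = set xs"
proof
  show "\<Union>(cyc_edges xs) \<subseteq> set xs"
    unfolding cyc_edges_def using assms by auto
  show "set xs \<subseteq> \<Union>(cyc_edges xs)"
  proof
    fix x assume "x \<in> set xs"
    then obtain k where "k < length xs" "x = xs ! k" by (metis in_set_conv_nth)
    then show "x \<in> \<Union>(cyc_edges xs)" unfolding cyc_edges_def by blast
  qed
qed

lemma cycle_through_common_neighbour:
  assumes "sgraph V E" "i \<in> X" "E i p" "E i q" "p \<noteq> q" "connected_avoiding E X p q"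
  shows "\<exists>D. is_cycle V E D \<and> i \<in> set D \<and> p \<in> set D \<and> q \<in> set D \<and> set D \<inter> X \<subseteq> {i}"
proof -
  obtain xs where xs: "hd xs = p" "last xs = q" "distinct xs" "2 \<le> length xs"
    "successively E xs" "set xs \<subseteq> V" "set xs \<inter> X = {}"
    using connected_avoiding_path[OF assms(1,6,5)] by blast
  have "i \<in> V" "E q i" using assms(1,4) unfolding sgraph_def by blast+
  with xs assms(2,3) have "is_cycle V E (i # xs)"
    by (intro is_cycle_of_path) (auto simp: successively_Cons)
  moreover have "xs \<noteq> []" using xs(4) by auto
  then have "p \<in> set xs" "q \<in> set xs" using xs(1,2) by auto
  ultimately show ?thesis using xs(7) by (intro exI[of _ "i # xs"]) auto
qed

lemma cycle_through_edge_avoiding: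
  assumes sg: "sgraph V E" and yy': "E y y'" and "x \<noteq> y" "x \<noteq> y'"
    and "connected_avoiding E {x, y'} w y" "connected_avoiding E {x, y} w y'"
  shows "\<exists>D. is_cycle V E D \<and> y \<in> set D \<and> y' \<in> set D \<and> x \<notin> set D"
proof -
  have sym: "E a b \<Longrightarrow> E b a" for a b using sg unfolding sgraph_def by blast
  \<comment> \<open>Both walks avoid the edge yy', as the first avoids y' and the second avoids y.\<close>
  define F where "F = (\<lambda>s t. E s t \<and> {s, t} \<noteq> {y, y'})"
  define R where "R = (\<lambda>s t. F s t \<and> s \<noteq> x \<and> t \<noteq> x)"
  have "symp R" unfolding R_def F_def using sym by (auto intro: sympI simp: insert_commute)
  have "R\<^sup>*\<^sup>* w y"
    using assms(5) unfolding connected_avoiding_def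
    by (rule rtranclp_mono[THEN predicate2D, rotated]) (auto simp: R_def F_def doubleton_eq_iff)
  moreover have "R\<^sup>*\<^sup>* w y'"
    using assms(6) unfolding connected_avoiding_def
    by (rule rtranclp_mono[THEN predicate2D, rotated]) (auto simp: R_def F_def doubleton_eq_iff)
  ultimately have "R\<^sup>*\<^sup>* y y'"
    using sympD[OF symp_rtranclp[OF \<open>symp R\<close>]] by (blast intro: rtranclp_trans)
  then obtain xs where xs: "xs \<noteq> []" "hd xs = y" "last xs = y'" "distinct xs"
    and path: "successively R xs"
    using rtranclp_distinct_path[of R y y'] by blast
  have "y \<noteq> y'" using yy' sg unfolding sgraph_def by blast
  then have len: "3 \<le> length xs"
    using successively_length_ge_3[OF path xs(1)] xs(2,3) by (simp add: R_def F_def)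
  have walk: "successively E xs"
    using successively_mono[OF path] unfolding R_def F_def by blast
  have "\<forall>z\<in>set xs. z \<noteq> x"
    using successively_guarded_all[of F "\<lambda>s. s \<noteq> x", OF path[unfolded R_def]] len by simp
  moreover have "is_cycle V E xs"
  proof (rule is_cycle_of_path)
    show "set xs \<subseteq> V" using successively_edges_in_vertices[OF sg walk] len by simp
    show "E (last xs) (hd xs)" using xs(2,3) sym[OF yy'] by simp
  qed (use xs len walk in auto)
  moreover have "y \<in> set xs" "y' \<in> set xs" using xs(1-3) by auto
  ultimately show ?thesis by blast
qed

lemma is_cycle_add_vertex_avoiding:
  assumes "is_cycle S (add_vertex E v N) D" "v \<notin> set D" "S \<subseteq> insert v V"
  shows "is_cycle V E D"
  unfolding is_cycle_def
proof (intro conjI allI impI)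
  fix i assume i: "i < length D"
  then have "(i + 1) mod length D < length D" by (metis mod_less_divisor not_less0 neq0_conv)
  then have "D ! i \<noteq> v" "D ! ((i + 1) mod length D) \<noteq> v"
    using assms(2) i nth_mem by metis+
  then show "E (D ! i) (D ! ((i + 1) mod length D))"
    using assms(1) i unfolding is_cycle_def add_vertex_def by auto
qed (use assms in \<open>auto simp: is_cycle_def\<close>)

lemma cycle_through_added_vertex:
  assumes sg: "sgraph V E" and "v \<notin> V"
    and D: "is_cycle S (add_vertex E v N) D" "v \<in> set D" "set D \<inter> X = {}"
  shows "\<exists>p\<in>N - X. \<exists>q\<in>N - X. p \<noteq> q \<and> connected_avoiding E X p q"
proof -
  let ?E = "add_vertex E v N"
  have E_old: "?E a b \<Longrightarrow> a \<noteq> v \<Longrightarrow> b \<noteq> v \<Longrightarrow> E a b" for a b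
    unfolding add_vertex_def by auto
  have E_new: "?E v b \<Longrightarrow> b \<in> N" "?E b v \<Longrightarrow> b \<in> N" for b
    using sg \<open>v \<notin> V\<close> unfolding add_vertex_def sgraph_def by auto
  obtain k where "k < length D" "D ! k = v" using D(2) by (metis in_set_conv_nth)
  define C where "C = rotate k D"
  let ?n = "length C"
  have "is_cycle S ?E C" unfolding C_def by (rule is_cycle_rotate[OF D(1)])
  then have n: "3 \<le> ?n" and dist: "distinct C"
    and edge: "\<And>i. i < ?n \<Longrightarrow> ?E (C ! i) (C ! ((i + 1) mod ?n))"
    unfolding is_cycle_def by auto
  have n0: "0 < ?n" using n by linarith
  have C0: "C ! 0 = v"
    using \<open>k < length D\<close> \<open>D ! k = v\<close> nth_rotate[of 0 D k] unfolding C_def by force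
  have CX: "set C \<inter> X = {}" using D(3) unfolding C_def by simp
  have not_v: "C ! j \<noteq> v" if "0 < j" "j < ?n" for j
  proof
    assume "C ! j = v"
    with C0 have "C ! j = C ! 0" by simp
    then show False using nth_eq_iff_index_eq[OF dist that(2) n0] that(1) by blast
  qed
  have path: "E (C ! m) (C ! Suc m)" if "1 \<le> m" "Suc m < ?n" for m
  proof -
    have "?E (C ! m) (C ! Suc m)" using edge[of m] that by simp
    moreover have "C ! m \<noteq> v" "C ! Suc m \<noteq> v" using not_v that by simp_all
    ultimately show ?thesis using E_old by blast
  qed
  have first: "1 < ?n" using n by linarith
  have last: "?n - 1 < ?n" "(?n - 1 + 1) mod ?n = 0" using n0 by simp_all
  have "C ! 1 \<in> N" using E_new(1) edge[OF n0] first C0 by simp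
  moreover have "C ! (?n - 1) \<in> N" using E_new(2) edge[OF last(1)] C0 unfolding last(2) by simp
  moreover have "C ! 1 \<notin> X" "C ! (?n - 1) \<notin> X"
    using CX nth_mem[OF first] nth_mem[OF last(1)] by blast+
  moreover have "C ! 1 \<noteq> C ! (?n - 1)" using n nth_eq_iff_index_eq[OF dist] by simp
  moreover have "connected_avoiding E X (C ! 1) (C ! (?n - 1))"
    using connected_avoiding_segment[of 1 C E X "?n - 1", OF path CX] first by simp
  ultimately show ?thesis by blast
qed

definition separating_transversal :: "'a set \<Rightarrow> ('a \<Rightarrow> 'a \<Rightarrow> bool) \<Rightarrow> 'a set \<Rightarrow> 'a set \<Rightarrow> bool" where
  "separating_transversal V E N I \<longleftrightarrow> I \<subseteq> N \<and> independent I E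
     \<and> (\<forall>D. is_cycle V E D \<longrightarrow> set D \<inter> I \<noteq> {})
     \<and> (\<forall>p\<in>N - I. \<forall>q\<in>N - I. p \<noteq> q \<longrightarrow> \<not> connected_avoiding E I p q)"

lemma near_bipartite_coloring_add_vertex:
  assumes sg: "sgraph V E" and "v \<notin> V" "N \<subseteq> V" and I: "separating_transversal V E N I"
  shows "near_bipartite_coloring (insert v V) (add_vertex E v N) I (insert v V - I)
    \<and> I \<subseteq> {u. add_vertex E v N v u}"
proof -
  let ?E = "add_vertex E v N"
  have "I \<subseteq> N" "independent I E" and meets: "\<And>D. is_cycle V E D \<Longrightarrow> set D \<inter> I \<noteq> {}"
    and separates: "\<And>p q. p \<in> N - I \<Longrightarrow> q \<in> N - I \<Longrightarrow> p \<noteq> q \<Longrightarrow> \<not> connected_avoiding E I p q"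
    using I unfolding separating_transversal_def by auto
  have "independent I ?E"
    using \<open>independent I E\<close> \<open>I \<subseteq> N\<close> \<open>N \<subseteq> V\<close> \<open>v \<notin> V\<close>
    unfolding independent_def add_vertex_def by blast
  moreover have "induced_forest (insert v V - I) ?E"
    unfolding induced_forest_def
  proof
    assume "\<exists>D. is_cycle (insert v V - I) ?E D"
    then obtain D where D: "is_cycle (insert v V - I) ?E D" by blast
    then have DI: "set D \<inter> I = {}" unfolding is_cycle_def by auto
    show False
    proof (cases "v \<in> set D")
      case False
      then have "is_cycle V E D" using is_cycle_add_vertex_avoiding[OF D] by blast
      then show False using meets DI by blast
    next
      case True
      then show False
        using cycle_through_added_vertex[OF sg \<open>v \<notin> V\<close> D True DI] separates by blast
    qed
  qed
  moreover have "I \<subseteq> {u. ?E v u}" using \<open>I \<subseteq> N\<close> unfolding add_vertex_def by blast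
  ultimately show ?thesis
    unfolding near_bipartite_coloring_def using \<open>I \<subseteq> N\<close> \<open>N \<subseteq> V\<close> by blast
qed

locale unique_cycle_graph =
  fixes V :: "'a set" and E :: "'a \<Rightarrow> 'a \<Rightarrow> bool" and K :: "'a set"
  assumes sgraph: "sgraph V E"
    and cycle_vertices: "is_cycle V E D \<Longrightarrow> set D = K"
    and triangle_free: "E a b \<Longrightarrow> E b c \<Longrightarrow> E a c \<Longrightarrow> False"
begin

lemma edge_sym: "E x y \<Longrightarrow> E y x"
  using sgraph unfolding sgraph_def by blast

lemma edge_irrefl: "\<not> E x x"
  using sgraph unfolding sgraph_def by blast

lemma common_neighbour_on_cycle:
  assumes "i \<in> X" "E i p" "E i q" "p \<noteq> q" "connected_avoiding E X p q"
  shows "i \<in> K \<and> p \<in> K \<and> q \<in> K \<and> K \<inter> X \<subseteq> {i}"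
  using cycle_through_common_neighbour[OF sgraph assms] cycle_vertices by blast

lemma edge_on_cycle_avoiding:
  assumes "E y y'" "x \<noteq> y" "x \<noteq> y'"
    and "connected_avoiding E {x, y'} w y" "connected_avoiding E {x, y} w y'"
  shows "y \<in> K \<and> y' \<in> K \<and> x \<notin> K"
  using cycle_through_edge_avoiding[OF sgraph assms] cycle_vertices by blast

end

locale attachment = unique_cycle_graph +
  fixes N :: "'a set"
  assumes N_subset: "N \<subseteq> V" and card_N: "card N \<le> 4"
    and N_meets_cycle: "K \<noteq> {} \<Longrightarrow> N \<inter> K \<noteq> {}"
begin

lemma separating_transversalI:
  assumes "I \<subseteq> N" "independent I E" "K \<noteq> {} \<Longrightarrow> I \<inter> K \<noteq> {}"
    and "\<And>p q. p \<in> N - I \<Longrightarrow> q \<in> N - I \<Longrightarrow> p \<noteq> q \<Longrightarrow> \<not> connected_avoiding E I p q"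
  shows "separating_transversal V E N I"
proof -
  have "set D \<inter> I \<noteq> {}" if "is_cycle V E D" for D
  proof -
    have "set D \<noteq> {}" using that unfolding is_cycle_def by auto
    then show ?thesis using assms(3) cycle_vertices[OF that] by blast
  qed
  then show ?thesis using assms unfolding separating_transversal_def by blast
qed

lemma star_separating_transversal:
  assumes "z \<in> N" and centre: "\<And>x y. x \<in> N \<Longrightarrow> y \<in> N \<Longrightarrow> E x y \<Longrightarrow> x = z \<or> y = z"
  shows "\<exists>I. separating_transversal V E N I"
proof (cases "K = {} \<or> (N - {z}) \<inter> K \<noteq> {}")
  case True
  have "separating_transversal V E N (N - {z})"
    by (rule separating_transversalI) (use True centre in \<open>auto simp: independent_def\<close>)
  then show ?thesis by blast
next
  case False
  then have "z \<in> K" and off_cycle: "(N - {z}) \<inter> K = {}"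
    using N_meets_cycle \<open>z \<in> N\<close> by auto
  let ?I = "{x \<in> N. \<not> E z x}"  \<comment> \<open>contains z, as E is irreflexive\<close>
  have "separating_transversal V E N ?I"
  proof (rule separating_transversalI)
    show "independent ?I E" using centre edge_sym unfolding independent_def by blast
    show "?I \<inter> K \<noteq> {}" using \<open>z \<in> N\<close> \<open>z \<in> K\<close> edge_irrefl by blast
    fix p q assume "p \<in> N - ?I" "q \<in> N - ?I" "p \<noteq> q"
    then have "E z p" "E z q" "p \<in> N - {z}" using edge_irrefl by auto
    moreover have "z \<in> ?I" using \<open>z \<in> N\<close> edge_irrefl by blast
    ultimately show "\<not> connected_avoiding E ?I p q"
      using common_neighbour_on_cycle[of z ?I p q] \<open>p \<noteq> q\<close> off_cycle by blast
  qed auto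
  then show ?thesis by blast
qed

lemma pair_separating_transversal:
  assumes N: "N = {x, x', y, y'}" and "distinct [x, x', y, y']" "\<not> E x y"
    and "K \<noteq> {} \<Longrightarrow> x \<in> K \<or> y \<in> K" and "\<not> connected_avoiding E {x, y} x' y'"
  shows "separating_transversal V E N {x, y}"
proof (rule separating_transversalI)
  show "independent {x, y} E"
    using \<open>\<not> E x y\<close> edge_sym edge_irrefl unfolding independent_def by blast
  show "\<not> connected_avoiding E {x, y} p q" if "p \<in> N - {x, y}" "q \<in> N - {x, y}" "p \<noteq> q" for p q
    using that assms(2,5) connected_avoiding_sym[OF sgraph] unfolding N by auto
qed (use assms in auto)

lemma matching_without_cross_edges:
  assumes N: "N = {a, b, c, d}" and dist: "distinct [a, b, c, d]" and "E a b" "E c d"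
    and no_cross: "\<not> E a c" "\<not> E a d" "\<not> E b c" "\<not> E b d"
  shows "\<exists>I. separating_transversal V E N I"
proof (rule ccontr)
  assume none: "\<nexists>I. separating_transversal V E N I"
  have "N = {a, b, d, c}" "N = {b, a, c, d}" "N = {b, a, d, c}" using N by auto
  then have ac: "K \<noteq> {} \<and> a \<notin> K \<and> c \<notin> K \<or> connected_avoiding E {a, c} b d"
    and ad: "K \<noteq> {} \<and> a \<notin> K \<and> d \<notin> K \<or> connected_avoiding E {a, d} b c"
    and bc: "K \<noteq> {} \<and> b \<notin> K \<and> c \<notin> K \<or> connected_avoiding E {b, c} a d"
    and bd: "K \<noteq> {} \<and> b \<notin> K \<and> d \<notin> K \<or> connected_avoiding E {b, d} a c"
    using pair_separating_transversal[of a b c d] pair_separating_transversal[of a b d c]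
      pair_separating_transversal[of b a c d] pair_separating_transversal[of b a d c]
      N dist no_cross none by auto
  have sym: "connected_avoiding E X p q \<Longrightarrow> connected_avoiding E X q p" for X p q
    using connected_avoiding_sym[OF sgraph] .
  have ac_ad: "c \<in> K \<and> d \<in> K \<and> a \<notin> K"
    if "connected_avoiding E {a, c} b d" "connected_avoiding E {a, d} b c"
    using edge_on_cycle_avoiding[of c d a b] that \<open>E c d\<close> dist by simp
  have bc_bd: "c \<in> K \<and> d \<in> K \<and> b \<notin> K"
    if "connected_avoiding E {b, c} a d" "connected_avoiding E {b, d} a c"
    using edge_on_cycle_avoiding[of c d b a] that \<open>E c d\<close> dist by simp
  have ac_bc: "a \<in> K \<and> b \<in> K \<and> c \<notin> K"
    if "connected_avoiding E {a, c} b d" "connected_avoiding E {b, c} a d"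
    using edge_on_cycle_avoiding[of a b c d] sym[OF that(1)] sym[OF that(2)] \<open>E a b\<close> dist
    by (auto simp: insert_commute)
  have ad_bd: "a \<in> K \<and> b \<in> K \<and> d \<notin> K"
    if "connected_avoiding E {a, d} b c" "connected_avoiding E {b, d} a c"
    using edge_on_cycle_avoiding[of a b d c] sym[OF that(1)] sym[OF that(2)] \<open>E a b\<close> dist
    by (auto simp: insert_commute)
  have "K \<noteq> {} \<Longrightarrow> a \<in> K \<or> b \<in> K \<or> c \<in> K \<or> d \<in> K" using N_meets_cycle N by auto
  then show False using ac ad bc bd ac_ad bc_bd ac_bc ad_bd by blast
qed

lemma matching_with_cross_edge:
  assumes N: "N = {a, b, c, d}" and dist: "distinct [a, b, c, d]" and "E a b" "E c d" "E a c"
  shows "\<exists>I. separating_transversal V E N I"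
proof (rule ccontr)
  assume none: "\<nexists>I. separating_transversal V E N I"
  have "\<not> E a d" using triangle_free[of a c d] assms(4,5) by blast
  have "\<not> E b c" using triangle_free[of a b c] assms(3,5) by blast
  have "N = {a, b, d, c}" "N = {b, a, c, d}" using N by auto
  then have ad: "K \<noteq> {} \<and> a \<notin> K \<and> d \<notin> K \<or> connected_avoiding E {a, d} b c"
    and bc: "K \<noteq> {} \<and> b \<notin> K \<and> c \<notin> K \<or> connected_avoiding E {b, c} a d"
    using pair_separating_transversal[of a b d c] pair_separating_transversal[of b a c d]
      N dist \<open>\<not> E a d\<close> \<open>\<not> E b c\<close> none by auto
  have ad_cycle: "a \<in> K \<and> b \<in> K \<and> c \<in> K \<and> d \<notin> K" if "connected_avoiding E {a, d} b c"
    using common_neighbour_on_cycle[of a "{a, d}" b c] that assms(3,5) dist by auto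
  have bc_cycle: "a \<in> K \<and> c \<in> K \<and> d \<in> K \<and> b \<notin> K" if "connected_avoiding E {b, c} a d"
    using common_neighbour_on_cycle[of c "{b, c}" a d] that edge_sym[OF assms(5)] assms(4) dist
    by auto
  have "K \<noteq> {} \<Longrightarrow> a \<in> K \<or> b \<in> K \<or> c \<in> K \<or> d \<in> K" using N_meets_cycle N by auto
  then show False using ad bc ad_cycle bc_cycle by blast
qed

lemma matching_separating_transversal:
  assumes N: "N = {a, b, c, d}" and dist: "distinct [a, b, c, d]" and ab: "E a b" and cd: "E c d"
  shows "\<exists>I. separating_transversal V E N I"
proof -
  have ba: "E b a" and dc: "E d c" using ab cd edge_sym by auto
  have "N = {a, b, d, c}" "N = {b, a, c, d}" "N = {b, a, d, c}" using N by auto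
  consider "E a c" | "E a d" | "E b c" | "E b d" | "\<not> E a c" "\<not> E a d" "\<not> E b c" "\<not> E b d"
    by blast
  then show ?thesis
  proof cases
    case 1
    then show ?thesis using matching_with_cross_edge[of a b c d] N dist ab cd by blast
  next
    case 2
    then show ?thesis
      using matching_with_cross_edge[of a b d c] \<open>N = {a, b, d, c}\<close> dist ab dc by auto
  next
    case 3
    then show ?thesis
      using matching_with_cross_edge[of b a c d] \<open>N = {b, a, c, d}\<close> dist ba cd by auto
  next
    case 4
    then show ?thesis
      using matching_with_cross_edge[of b a d c] \<open>N = {b, a, d, c}\<close> dist ba dc by auto
  next
    case 5
    then show ?thesis using matching_without_cross_edges N dist ab cd by blast
  qed
qed

lemma two_disjoint_edges:
  assumes "N \<noteq> {}"
    and no_centre: "\<nexists>z. z \<in> N \<and> (\<forall>x\<in>N. \<forall>y\<in>N. E x y \<longrightarrow> x = z \<or> y = z)"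
  shows "\<exists>a b c d. N = {a, b, c, d} \<and> distinct [a, b, c, d] \<and> E a b \<and> E c d"
proof -
  have avoid: "\<exists>x\<in>N. \<exists>y\<in>N. E x y \<and> x \<noteq> z \<and> y \<noteq> z" if "z \<in> N" for z
    using no_centre that by blast
  have fill: "N = {a, b, c, d}" if "distinct [a, b, c, d]" "{a, b, c, d} \<subseteq> N" for a b c d
  proof -
    have "finite N" using sgraph N_subset finite_subset unfolding sgraph_def by blast
    moreover have "card {a, b, c, d} = 4" using that(1) by simp
    ultimately show ?thesis using card_seteq[OF _ that(2)] card_N by simp
  qed
  obtain a b where ab: "a \<in> N" "b \<in> N" "E a b" using avoid assms(1) by blast
  obtain x y where xy: "x \<in> N" "y \<in> N" "E x y" "x \<noteq> a" "y \<noteq> a" using avoid[OF ab(1)] by blast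
  obtain s t where st: "s \<in> N" "t \<in> N" "E s t" "s \<noteq> b" "t \<noteq> b" using avoid[OF ab(2)] by blast
  consider "b \<notin> {x, y}" | "a \<notin> {s, t}"
    | w u where "w \<in> N" "E b w" "w \<noteq> a" "u \<in> N" "E a u" "u \<noteq> b"
    using xy st edge_sym by blast
  then show ?thesis
  proof cases
    case 1
    then have "distinct [a, b, x, y]" using ab xy edge_irrefl by auto
    then show ?thesis using fill ab xy by blast
  next
    case 2
    then have "distinct [a, b, s, t]" using ab st edge_irrefl by auto
    then show ?thesis using fill ab st by blast
  next
    case (3 w u)
    then have "u \<noteq> w" using triangle_free[of a b w] ab by blast
    with 3 have "distinct [a, u, b, w]" using ab edge_irrefl by auto
    then show ?thesis using fill 3 ab by blast
  qed
qed

lemma separating_transversal_exists: "\<exists>I. separating_transversal V E N I"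
proof (cases "\<exists>z. z \<in> N \<and> (\<forall>x\<in>N. \<forall>y\<in>N. E x y \<longrightarrow> x = z \<or> y = z)")
  case True
  then show ?thesis using star_separating_transversal by blast
next
  case no_centre: False
  show ?thesis
  proof (cases "N = {}")
    case True
    then have "separating_transversal V E N {}"
      using N_meets_cycle by (intro separating_transversalI) (auto simp: independent_def)
    then show ?thesis by blast
  next
    case False
    then show ?thesis
      using two_disjoint_edges[OF False no_centre] matching_separating_transversal by blast
  qed
qed

end

lemma unique_cycle_graph_of_tree_or_unicyclic:
  assumes sg: "sgraph V E"
    and "is_tree V E \<or>
         (connected_graph V E \<and>
          (\<exists>C. is_cycle V E C \<and> length C \<noteq> 3
               \<and> (\<forall>C'. is_cycle V E C' \<longrightarrow> cyc_edges C' = cyc_edges C)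
               \<and> N \<inter> set C \<noteq> {}))"
  obtains K where "unique_cycle_graph V E K" "K \<noteq> {} \<Longrightarrow> N \<inter> K \<noteq> {}"
proof (cases "is_tree V E")
  case True
  then have "\<nexists>D. is_cycle V E D" unfolding is_tree_def induced_forest_def by blast
  then have "unique_cycle_graph V E {}"
    using sg triangle_is_cycle[OF sg] by unfold_locales blast+
  then show ?thesis using that by blast
next
  case False
  then obtain C where C: "is_cycle V E C" "length C \<noteq> 3"
    "\<And>D. is_cycle V E D \<Longrightarrow> cyc_edges D = cyc_edges C" "N \<inter> set C \<noteq> {}"
    using assms(2) by blast
  have cycle_vertices: "set D = set C" if "is_cycle V E D" for D
  proof -
    have "D \<noteq> []" "C \<noteq> []" using that C(1) unfolding is_cycle_def by auto
    then show ?thesis using Union_cyc_edges C(3)[OF that] by metis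
  qed
  have "False" if "E a b" "E b c" "E a c" for a b c
  proof -
    have triangle: "is_cycle V E [a, b, c]" using triangle_is_cycle[OF sg that] .
    have "length C = card (set C)" using C(1) distinct_card unfolding is_cycle_def by metis
    also have "\<dots> = card (set [a, b, c])" using cycle_vertices[OF triangle] by simp
    also have "\<dots> = 3" using triangle distinct_card unfolding is_cycle_def by fastforce
    finally show False using C(2) by simp
  qed
  then have "unique_cycle_graph V E (set C)"
    using sg cycle_vertices by unfold_locales blast+
  then show ?thesis using that C(4) by blast
qed

theorem lemma4p36:
  fixes V :: "'a set" and E :: "'a \<Rightarrow> 'a \<Rightarrow> bool" and v :: 'a and N :: "'a set"
  assumes "sgraph V E"
    and "is_tree V E \<or>
         (connected_graph V E \<and>
          (\<exists>C. is_cycle V E C \<and> length C \<noteq> 3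
               \<and> (\<forall>C'. is_cycle V E C' \<longrightarrow> cyc_edges C' = cyc_edges C)
               \<and> N \<inter> set C \<noteq> {}))"
    and "v \<notin> V"
    and "N \<subseteq> V"
    and "card N \<le> 4"
  shows "\<exists>I F. near_bipartite_coloring (insert v V) (add_vertex E v N) I F
               \<and> I \<subseteq> {u. add_vertex E v N v u}"
proof -
  obtain K where K: "unique_cycle_graph V E K" "K \<noteq> {} \<Longrightarrow> N \<inter> K \<noteq> {}"
    using unique_cycle_graph_of_tree_or_unicyclic[OF assms(1,2)] by blast
  interpret attachment V E K N
    using K assms(4,5) by (simp add: attachment_def attachment_axioms_def)
  obtain I where "separating_transversal V E N I" using separating_transversal_exists by blast
  then show ?thesis using near_bipartite_coloring_add_vertex[OF assms(1,3,4)] by blast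
qed

end
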